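(* Let $K>0$, $1\le\ell\le L$, $r_\ell=Kh_{\ell-1}|\log h_{\ell-1}|$, and let $\mathbf p_\ell^{\rm tr}$ be the truncation of $\mathbf p_\ell$ keeping the entry at row $\eta\in\Xi_\ell$, column $\xi\in\Xi_{\ell-1}$ when $\mathrm{dist}(\xi,\eta)\le r_\ell$ and setting it to $0$ otherwise. Then there is a constant $C_{\rm trunc}$, independent of $\ell$, such that $$\|\mathbf p_\ell-\mathbf p_\ell^{\rm tr}\|_{\ell_2(\Xi_{\ell-1})\to\ell_2(\Xi_\ell)}\le C_{pw}C_{\rm trunc}(K|\log h_\ell|)^dh_\ell^{\frac\nu2K}.$$
   Context: Let $\mathbb{M}$ be a compact $d$-dimensional Riemannian manifold without boundary, with volume measure $\mu$, geodesic distance $\mathrm{dist}$, balls $B(x,r)$, Sobolev spaces $W_2^k(\mathbb M)$. For finite $\Xi$: $q=\frac12\min_{\zeta\in\Xi}\mathrm{dist}(\zeta,\Xi\setminus\{\zeta\})$, $h=\sup_x\mathrm{dist}(x,\Xi)$. Kernel $\phi$ conditionally positive definite w.r.t. finite-dimensional $\Pi\subset C^\infty(\mathbb M)$, native space $\cong W_2^m(\mathbb M)$ modulo $\Pi$, integer $m>d/2+1$; trial spaces $V_\Xi=\{\sum_\xi a_\xi\phi(\cdot,\xi):\sum_\xi a_\xi p(\xi)=0\ \forall p\in\Pi\}+\Pi$ with Lagrange bases $\chi_\xi$, $\chi_\xi(\zeta)=\delta_{\xi\zeta}$, satisfying $\|\chi_\xi\|_{W_2^m(\mathbb{M}\setminus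 B(\xi,R))}\le C_{en}q^{d/2-m}e^{-\nu R/h}$ (constants $\nu>0$, $C_{en}$). $C_{pw}$ is a constant with $|\chi_\xi(x)|\le C_{pw}e^{-\nu\,\mathrm{dist}(x,\xi)/h}$ for all $x\in\mathbb M$, all point sets $\Xi$ considered and $\xi\in\Xi$. Multilevel: nested $\Xi_0\subset\dots\subset\Xi_L$ separating elements of $\Pi$, $h_\ell=h(\Xi_\ell)$, $q_\ell\le h_\ell\le\rho q_\ell$, $\gamma_1h_\ell\le h_{\ell+1}\le\gamma_2h_\ell$ ($\rho\ge1$, $0<\gamma_1\le\gamma_2<1$), $n_\ell=\#\Xi_\ell$, Lagrange bases $\chi^{(\ell)}_\xi$; prolongation $\mathbf p_\ell\in\mathbb R^{n_\ell\times n_{\ell-1}}$ with entry $\chi^{(\ell-1)}_\xi(\eta)$ at row $\eta\in\Xi_\ell$, column $\xi\in\Xi_{\ell-1}$. *)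

theory Defs
  imports "HOL-Analysis.Analysis"
begin

definition fill_dist :: "'a::metric_space set \<Rightarrow> real" where
  "fill_dist Xi = (SUP x\<in>(UNIV::'a set). infdist x Xi)"

definition sep_rad :: "'a::metric_space set \<Rightarrow> real" where
  "sep_rad Xi = Inf {dist z z' | z z'. z \<in> Xi \<and> z' \<in> Xi \<and> z \<noteq> z'} / 2"

text \<open>Prolongation matrix p_l: entry at row eta in Xi_l, column xi in Xi_(l-1)
  is chi^(l-1)_xi(eta).  chi l xi x stands for the Lagrange function chi^(l)_xi(x).\<close>
definition prolong :: "(nat \<Rightarrow> 'a \<Rightarrow> 'a \<Rightarrow> real) \<Rightarrow> nat \<Rightarrow> 'a \<Rightarrow> 'a \<Rightarrow> real" where
  "prolong chi l eta xi = chi (l - 1) xi eta"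

definition prolong_tr ::
  "(nat \<Rightarrow> 'a::metric_space \<Rightarrow> 'a \<Rightarrow> real) \<Rightarrow> real \<Rightarrow> nat \<Rightarrow> 'a \<Rightarrow> 'a \<Rightarrow> real" where
  "prolong_tr chi r l eta xi = (if dist xi eta \<le> r then prolong chi l eta xi else 0)"

text \<open>Operator norm l2(X) \<rightarrow> l2(Y) of a matrix A (row index in Y, column index in X).\<close>
definition l2_opnorm :: "('r \<Rightarrow> 'c \<Rightarrow> real) \<Rightarrow> 'c set \<Rightarrow> 'r set \<Rightarrow> real" where
  "l2_opnorm A X Y =
     (SUP v\<in>{v. (\<Sum>x\<in>X. (v x)^2) \<le> 1}. sqrt (\<Sum>y\<in>Y. (\<Sum>x\<in>X. A y x * v x)^2))"

end

(*
  Truncation only removes the entries chi_xi(eta) with dist(xi, eta) > r = K h |log h|, where h is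
  the coarse fill distance, and by the pointwise decay each of them is at most
  C_pw exp(-nu r / (2h)) exp(-nu dist(xi, eta) / (2h)) = C_pw h^(nu K / 2) exp(-nu dist(xi, eta) / (2h)).
  By Schur's test the l2 operator norm is bounded by the largest row and column sums, and for
  quasi-uniform point sets the sums of exp(-nu dist / (2h)) are bounded independently of h:
  the ball volume bounds c1 r^d <= mu(B(x, r)) <= c2 r^d leave room for only O((m + 1)^d) points
  in the shell m <= nu dist / (2h) < m + 1, which the factor exp(-m) absorbs.  Passing from
  h_(l-1) to h_l costs gamma1^(-nu K / 2), and (K |log h_l|)^d is bounded below by (K |log hmax|)^d.
*)

theory Submission
  imports Defs
begin

section \<open>Schur's test for truncated matrices\<close>

lemma sum_mult_square_le:
  fixes w u :: "'c \<Rightarrow> real"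
  assumes "\<And>x. x \<in> X \<Longrightarrow> 0 \<le> w x"
  shows "(\<Sum>x\<in>X. w x * u x)\<^sup>2 \<le> (\<Sum>x\<in>X. w x) * (\<Sum>x\<in>X. w x * (u x)\<^sup>2)"
proof -
  have "(\<Sum>x\<in>X. w x * u x) = (\<Sum>x\<in>X. sqrt (w x) * (sqrt (w x) * u x))"
    using assms by (intro sum.cong) (auto simp flip: mult.assoc)
  also have "(\<dots>)\<^sup>2 \<le> (\<Sum>x\<in>X. (sqrt (w x))\<^sup>2) * (\<Sum>x\<in>X. (sqrt (w x) * u x)\<^sup>2)"
    by (rule Cauchy_Schwarz_ineq_sum)
  also have "\<dots> = (\<Sum>x\<in>X. w x) * (\<Sum>x\<in>X. w x * (u x)\<^sup>2)"
    using assms by (simp add: power_mult_distrib)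
  finally show ?thesis .
qed

lemma l2_opnorm_le_Schur:
  fixes A :: "'r \<Rightarrow> 'c \<Rightarrow> real"
  assumes row: "\<And>y. y \<in> Y \<Longrightarrow> (\<Sum>x\<in>X. \<bar>A y x\<bar>) \<le> R"
    and col: "\<And>x. x \<in> X \<Longrightarrow> (\<Sum>y\<in>Y. \<bar>A y x\<bar>) \<le> C"
    and "0 \<le> R" "0 \<le> C"
  shows "l2_opnorm A X Y \<le> sqrt (R * C)"
  unfolding l2_opnorm_def
proof (rule cSUP_least)
  show "{v :: 'c \<Rightarrow> real. (\<Sum>x\<in>X. (v x)\<^sup>2) \<le> 1} \<noteq> {}"
    by (auto intro!: exI[of _ "\<lambda>_. 0"])
next
  fix v :: "'c \<Rightarrow> real" assume "v \<in> {v. (\<Sum>x\<in>X. (v x)\<^sup>2) \<le> 1}"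
  then have v: "(\<Sum>x\<in>X. (v x)\<^sup>2) \<le> 1" by simp
  have "(\<Sum>x\<in>X. A y x * v x)\<^sup>2 \<le> R * (\<Sum>x\<in>X. \<bar>A y x\<bar> * (v x)\<^sup>2)" if "y \<in> Y" for y
  proof -
    have "(\<Sum>x\<in>X. A y x * v x)\<^sup>2 = (\<Sum>x\<in>X. \<bar>A y x\<bar> * (sgn (A y x) * v x))\<^sup>2"
      by (intro arg_cong[where f="\<lambda>t. t\<^sup>2"] sum.cong) (auto simp: sgn_if)
    also have "\<dots> \<le> (\<Sum>x\<in>X. \<bar>A y x\<bar>) * (\<Sum>x\<in>X. \<bar>A y x\<bar> * (sgn (A y x) * v x)\<^sup>2)"
      by (rule sum_mult_square_le) simp
    also have "(\<Sum>x\<in>X. \<bar>A y x\<bar> * (sgn (A y x) * v x)\<^sup>2) = (\<Sum>x\<in>X. \<bar>A y x\<bar> * (v x)\<^sup>2)"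
      by (intro sum.cong) (auto simp: power_mult_distrib sgn_if)
    also have "(\<Sum>x\<in>X. \<bar>A y x\<bar>) * (\<Sum>x\<in>X. \<bar>A y x\<bar> * (v x)\<^sup>2) \<le> R * (\<Sum>x\<in>X. \<bar>A y x\<bar> * (v x)\<^sup>2)"
      by (intro mult_right_mono row that sum_nonneg) auto
    finally show ?thesis .
  qed
  then have "(\<Sum>y\<in>Y. (\<Sum>x\<in>X. A y x * v x)\<^sup>2) \<le> R * (\<Sum>y\<in>Y. \<Sum>x\<in>X. \<bar>A y x\<bar> * (v x)\<^sup>2)"
    by (simp add: sum_distrib_left sum_mono)
  also have "\<dots> = R * (\<Sum>x\<in>X. (v x)\<^sup>2 * (\<Sum>y\<in>Y. \<bar>A y x\<bar>))"
    by (simp add: sum_distrib_left mult_ac sum.swap[of _ Y X])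
  also have "\<dots> \<le> R * (\<Sum>x\<in>X. (v x)\<^sup>2 * C)"
    using assms by (intro mult_left_mono sum_mono) auto
  also have "\<dots> = R * ((\<Sum>x\<in>X. (v x)\<^sup>2) * C)"
    by (simp add: sum_distrib_right)
  also have "\<dots> \<le> R * C"
    using v assms by (intro mult_left_mono mult_left_le_one_le sum_nonneg) auto
  finally show "sqrt (\<Sum>y\<in>Y. (\<Sum>x\<in>X. A y x * v x)\<^sup>2) \<le> sqrt (R * C)" by simp
qed

lemma l2_opnorm_eq_0:
  fixes A :: "'r \<Rightarrow> 'c \<Rightarrow> real"
  assumes "\<And>x y. x \<in> X \<Longrightarrow> y \<in> Y \<Longrightarrow> A y x = 0"
  shows "l2_opnorm A X Y = 0"
proof -
  have "l2_opnorm A X Y = (SUP v\<in>{v :: 'c \<Rightarrow> real. (\<Sum>x\<in>X. (v x)\<^sup>2) \<le> 1}. 0)"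
    unfolding l2_opnorm_def using assms by (intro SUP_cong) auto
  also have "\<dots> = 0"
    by (rule cSUP_const) (auto intro!: exI[of _ "\<lambda>_. 0"])
  finally show ?thesis .
qed

lemma l2_opnorm_truncated_le:
  fixes f :: "'a::metric_space \<Rightarrow> 'a \<Rightarrow> real"
  assumes decay: "\<And>x y. x \<in> X \<Longrightarrow> y \<in> Y \<Longrightarrow> r < dist x y \<Longrightarrow> \<bar>f x y\<bar> \<le> C * exp (- 2 * a * dist x y)"
    and row: "\<And>y. y \<in> Y \<Longrightarrow> (\<Sum>x\<in>X. exp (- a * dist x y)) \<le> B"
    and col: "\<And>x. x \<in> X \<Longrightarrow> (\<Sum>y\<in>Y. exp (- a * dist y x)) \<le> B"
    and "0 \<le> a" "0 \<le> C" "0 \<le> B"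
  shows "l2_opnorm (\<lambda>y x. if dist x y \<le> r then 0 else f x y) X Y \<le> C * exp (- a * r) * B"
proof -
  define E where "E = C * exp (- a * r)"
  have "0 \<le> E" using assms by (simp add: E_def)
  have entry: "\<bar>if dist x y \<le> r then 0 else f x y\<bar> \<le> E * exp (- a * dist x y)"
    if "x \<in> X" "y \<in> Y" for x y
  proof (cases "dist x y \<le> r")
    case False
    have "\<bar>f x y\<bar> \<le> C * (exp (- a * dist x y) * exp (- a * dist x y))"
      using decay[OF that] False by (simp add: exp_add[symmetric] mult.assoc)
    also have "\<dots> \<le> C * (exp (- a * r) * exp (- a * dist x y))"
      using False assms by (intro mult_left_mono mult_right_mono) (auto intro: mult_left_mono)
    finally show ?thesis using False by (simp add: E_def mult.assoc)
  qed (use \<open>0 \<le> E\<close> in simp)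
  have "l2_opnorm (\<lambda>y x. if dist x y \<le> r then 0 else f x y) X Y \<le> sqrt ((E * B) * (E * B))"
  proof (rule l2_opnorm_le_Schur)
    fix y assume "y \<in> Y"
    have "(\<Sum>x\<in>X. \<bar>if dist x y \<le> r then 0 else f x y\<bar>) \<le> (\<Sum>x\<in>X. E * exp (- a * dist x y))"
      using \<open>y \<in> Y\<close> by (intro sum_mono entry)
    also have "\<dots> \<le> E * B"
      using row[OF \<open>y \<in> Y\<close>] \<open>0 \<le> E\<close> by (simp add: sum_distrib_left[symmetric] mult_left_mono)
    finally show "(\<Sum>x\<in>X. \<bar>if dist x y \<le> r then 0 else f x y\<bar>) \<le> E * B" .
  next
    fix x assume "x \<in> X"
    have "(\<Sum>y\<in>Y. \<bar>if dist x y \<le> r then 0 else f x y\<bar>) \<le> (\<Sum>y\<in>Y. E * exp (- a * dist y x))"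
      using \<open>x \<in> X\<close> by (intro sum_mono) (metis entry dist_commute)
    also have "\<dots> \<le> E * B"
      using col[OF \<open>x \<in> X\<close>] \<open>0 \<le> E\<close> by (simp add: sum_distrib_left[symmetric] mult_left_mono)
    finally show "(\<Sum>y\<in>Y. \<bar>if dist x y \<le> r then 0 else f x y\<bar>) \<le> E * B" .
  qed (use \<open>0 \<le> E\<close> assms in auto)
  then show ?thesis using \<open>0 \<le> E\<close> assms by (simp add: E_def)
qed

lemma prolong_minus_prolong_tr:
  "prolong chi l eta xi - prolong_tr chi r l eta xi
    = (if dist xi eta \<le> r then 0 else chi (l - 1) xi eta)"
  unfolding prolong_tr_def prolong_def by simp

section \<open>Fill distance and separation radius\<close>

lemma infdist_le_fill_dist:
  assumes "bounded (UNIV :: 'a::metric_space set)" "X \<noteq> {}"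
  shows "infdist x (X :: 'a set) \<le> fill_dist X"
proof -
  obtain x0 where "x0 \<in> X" using assms(2) by auto
  then have "infdist y X \<le> diameter (UNIV :: 'a set)" for y
    using infdist_le[of x0 X y] diameter_bounded_bound[OF assms(1), of y x0] by simp
  then have "bdd_above (range (\<lambda>y. infdist y X))" by (rule bdd_aboveI2)
  then show ?thesis unfolding fill_dist_def by (rule cSUP_upper[rotated]) simp
qed

lemma fill_dist_nonneg:
  assumes "bounded (UNIV :: 'a::metric_space set)" "X \<noteq> {}"
  shows "0 \<le> fill_dist (X :: 'a set)"
  using infdist_le_fill_dist[OF assms] infdist_nonneg by (rule order.trans[rotated])

lemma fill_dist_eq_0_imp_mem:
  assumes "bounded (UNIV :: 'a::metric_space set)" "closed X" "X \<noteq> {}" "fill_dist X = 0"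
  shows "(x :: 'a) \<in> X"
  using infdist_le_fill_dist[OF assms(1,3), of x] infdist_nonneg[of x X]
  by (simp add: in_closed_iff_infdist_zero[OF assms(2,3)] assms(4))

lemma
  fixes X :: "'a::metric_space set"
  assumes "finite X" "x \<in> X" "y \<in> X" "x \<noteq> y"
  shows sep_rad_le_dist: "2 * sep_rad X \<le> dist x y"
    and sep_rad_pos: "0 < sep_rad X"
proof -
  define D where "D = {dist z z' | z z'. z \<in> X \<and> z' \<in> X \<and> z \<noteq> z'}"
  have "D \<subseteq> (\<lambda>(z, z'). dist z z') ` (X \<times> X)" unfolding D_def by auto
  then have "finite D" using assms(1) by (auto intro: finite_subset)
  have "dist x y \<in> D" unfolding D_def using assms by auto
  have sep_rad_D: "sep_rad X = Inf D / 2" unfolding sep_rad_def D_def by simp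
  show "2 * sep_rad X \<le> dist x y"
    using cInf_lower[OF \<open>dist x y \<in> D\<close> bdd_below_finite[OF \<open>finite D\<close>]] sep_rad_D by simp
  have "Inf D \<in> D" using \<open>finite D\<close> \<open>dist x y \<in> D\<close> by (metis cInf_eq_Min Min_in empty_iff)
  then show "0 < sep_rad X" unfolding sep_rad_D by (auto simp: D_def)
qed

lemma sep_rad_le_diameter:
  fixes X :: "'a::metric_space set"
  assumes "bounded (UNIV :: 'a set)" "finite X" "x \<in> X" "y \<in> X" "x \<noteq> y"
  shows "sep_rad X \<le> diameter (UNIV :: 'a set)"
  using sep_rad_le_dist[OF assms(2-)] sep_rad_pos[OF assms(2-)]
    diameter_bounded_bound[OF assms(1), of x y] by simp

lemma min_le_scaled_sep_rad:
  fixes \<nu> \<gamma> \<rho> h :: real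
  assumes "\<gamma> * h \<le> fill_dist Z" "fill_dist Z \<le> \<rho> * sep_rad Z" "0 < \<nu>" "0 < \<rho>" "0 < h"
  shows "min 1 (\<nu> * \<gamma> / (2 * \<rho>)) \<le> \<nu> / (2 * h) * sep_rad Z"
proof -
  have "min 1 (\<nu> * \<gamma> / (2 * \<rho>)) \<le> \<nu> / (2 * h) * (\<gamma> * h / \<rho>)"
    using assms by simp
  also have "\<dots> \<le> \<nu> / (2 * h) * sep_rad Z"
    using assms by (intro mult_left_mono) (auto simp: field_simps)
  finally show ?thesis .
qed

lemma nonneg_if_abs_le_mult_exp:
  fixes C :: real
  assumes "\<bar>u\<bar> \<le> C * exp t"
  shows "0 \<le> C"
  using order.trans[OF abs_ge_zero assms] by (simp add: zero_le_mult_iff)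

lemma power_linear_le_exp:
  fixes s \<beta> :: real
  assumes "0 \<le> s" "0 < \<beta>" "\<beta> \<le> 1" "d \<ge> 1"
  shows "(s / \<beta> + 1) ^ d \<le> (2 * real d / \<beta>) ^ d * exp (s / 2)"
proof -
  have "s / \<beta> + 1 \<le> (2 * real d / \<beta>) * (1 + s / (2 * real d))"
    using assms by (simp add: field_simps)
  also have "\<dots> \<le> (2 * real d / \<beta>) * exp (s / (2 * real d))"
    using assms exp_ge_add_one_self[of "s / (2 * real d)"] by (intro mult_left_mono) auto
  finally have "(s / \<beta> + 1) ^ d \<le> ((2 * real d / \<beta>) * exp (s / (2 * real d))) ^ d"
    using assms by (intro power_mono) auto
  also have "\<dots> = (2 * real d / \<beta>) ^ d * exp (real d * (s / (2 * real d)))"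
    by (simp only: power_mult_distrib exp_of_nat_mult)
  also have "real d * (s / (2 * real d)) = s / 2"
    using assms by simp
  finally show ?thesis .
qed

lemma exp_neg_mult_abs_ln:
  fixes h \<nu> K :: real
  assumes "0 < h" "h < 1"
  shows "exp (- (\<nu> / (2 * h)) * (K * h * \<bar>ln h\<bar>)) = h powr (\<nu> / 2 * K)"
  using assms by (simp add: powr_def abs_if field_simps)

lemma le_initial_if_contracting:
  fixes f :: "nat \<Rightarrow> real"
  assumes "f 0 \<le> M" "\<And>j. j < L \<Longrightarrow> f (Suc j) \<le> \<gamma> * f j" "\<And>j. j \<le> L \<Longrightarrow> 0 \<le> f j" "\<gamma> \<le> 1"
    and "i \<le> L"
  shows "f i \<le> M"
  using \<open>i \<le> L\<close>
proof (induction i)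
  case (Suc i)
  have "f (Suc i) \<le> \<gamma> * f i" using Suc.prems assms(2) by simp
  also have "\<dots> \<le> f i" using Suc.prems assms(3)[of i] mult_right_mono[OF \<open>\<gamma> \<le> 1\<close>] by simp
  finally show ?case using Suc by simp
qed (use assms(1) in simp)

lemma powr_mult_abs_ln_power_le:
  fixes h hmax e K :: real
  assumes "0 \<le> h" "h \<le> hmax" "hmax < 1" "0 \<le> K"
  shows "h powr e * (K * \<bar>ln hmax\<bar>) ^ d \<le> h powr e * (K * \<bar>ln h\<bar>) ^ d"
proof (cases "h = 0")
  case False
  then have "\<bar>ln hmax\<bar> \<le> \<bar>ln h\<bar>" using assms by simp
  then show ?thesis using assms by (intro mult_left_mono power_mono mult_left_mono) auto
qed simp

section \<open>Exponential sums over separated points\<close>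

locale ahlfors_regular_measure =
  fixes \<mu> :: "'a::metric_space measure" and d :: nat and c1 c2 :: real
  assumes sets_eq_borel: "sets \<mu> = sets borel"
    and emeasure_UNIV_finite: "emeasure \<mu> UNIV < \<infinity>"
    and c1_pos: "0 < c1"
    and measure_ball_lower: "\<And>x r. 0 < r \<Longrightarrow> r \<le> diameter (UNIV :: 'a set) \<Longrightarrow> c1 * r ^ d \<le> measure \<mu> (ball x r)"
    and measure_ball_upper: "\<And>x r. 0 < r \<Longrightarrow> measure \<mu> (ball x r) \<le> c2 * r ^ d"
begin

sublocale finite_measure \<mu>
  using emeasure_UNIV_finite sets_eq_imp_space_eq[OF sets_eq_borel]
  by (intro finite_measureI) simp

lemma c2_nonneg: "0 \<le> c2"
proof -
  have "0 \<le> measure \<mu> (ball undefined 1)" by (rule measure_nonneg)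
  also have "\<dots> \<le> c2" using measure_ball_upper[of 1] by simp
  finally show ?thesis .
qed

lemma card_separated_le:
  fixes S :: "'a set"
  assumes "finite S" "0 < q" "q \<le> diameter (UNIV :: 'a set)"
    and sep: "\<And>z z'. z \<in> S \<Longrightarrow> z' \<in> S \<Longrightarrow> z \<noteq> z' \<Longrightarrow> 2 * q \<le> dist z z'"
    and "0 < R" and near: "\<And>x. x \<in> S \<Longrightarrow> dist x p < R"
  shows "real (card S) * (c1 * q ^ d) \<le> c2 * (R + q) ^ d"
proof -
  have balls: "ball x r \<in> sets \<mu>" for x r using sets_eq_borel by simp
  have "disjoint_family_on (\<lambda>x. ball x q) S"
    unfolding disjoint_family_on_def
  proof (intro ballI impI equals0I)
    fix x y z assume "x \<in> S" "y \<in> S" "x \<noteq> y" "z \<in> ball x q \<inter> ball y q"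
    then have "dist x z < q" "dist y z < q" "2 * q \<le> dist x y" using sep[of x y] by auto
    then show False using dist_triangle2[of x y z] by linarith
  qed
  then have union: "measure \<mu> (\<Union>x\<in>S. ball x q) = (\<Sum>x\<in>S. measure \<mu> (ball x q))"
    using \<open>finite S\<close> balls by (intro finite_measure_finite_Union) auto
  have "(\<Union>x\<in>S. ball x q) \<subseteq> ball p (R + q)"
  proof
    fix y assume "y \<in> (\<Union>x\<in>S. ball x q)"
    then obtain x where "x \<in> S" "dist x y < q" by auto
    then show "y \<in> ball p (R + q)"
      using near[of x] dist_triangle3[of p y x] by simp
  qed
  then have cover: "measure \<mu> (\<Union>x\<in>S. ball x q) \<le> measure \<mu> (ball p (R + q))"
    using balls by (rule finite_measure_mono)
  have "real (card S) * (c1 * q ^ d) = (\<Sum>x\<in>S. c1 * q ^ d)" by simp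
  also have "\<dots> \<le> (\<Sum>x\<in>S. measure \<mu> (ball x q))"
    using assms by (intro sum_mono measure_ball_lower)
  also have "\<dots> \<le> c2 * (R + q) ^ d"
    using union cover measure_ball_upper[of "R + q" p] assms by simp
  finally show ?thesis .
qed

lemma card_separated_le_exp:
  fixes S :: "'a set"
  assumes "d \<ge> 1" "finite S" "0 < q" "q \<le> diameter (UNIV :: 'a set)"
    and sep: "\<And>z z'. z \<in> S \<Longrightarrow> z' \<in> S \<Longrightarrow> z \<noteq> z' \<Longrightarrow> 2 * q \<le> dist z z'"
    and "0 < a" "0 < \<beta>" "\<beta> \<le> 1" "\<beta> \<le> a * q" "0 < t"
    and near: "\<And>x. x \<in> S \<Longrightarrow> a * dist x p < t"
  shows "real (card S) \<le> c2 / c1 * (2 * real d / \<beta>) ^ d * exp (t / 2)"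
proof -
  have "real (card S) * (c1 * q ^ d) \<le> c2 * (t / a + q) ^ d"
    using assms by (intro card_separated_le[where p = p]) (auto simp: field_simps)
  also have "(t / a + q) ^ d = (t / (a * q) + 1) ^ d * q ^ d"
    using assms by (simp add: field_simps flip: power_mult_distrib)
  finally have "real (card S) * c1 \<le> c2 * (t / (a * q) + 1) ^ d"
    using assms by (simp add: mult.assoc[symmetric])
  also have "\<dots> \<le> c2 * ((2 * real d / \<beta>) ^ d * exp (t / 2))"
  proof (intro mult_left_mono c2_nonneg)
    have "(t / (a * q) + 1) ^ d \<le> (t / \<beta> + 1) ^ d"
      using assms by (intro power_mono add_right_mono divide_left_mono) auto
    also have "\<dots> \<le> (2 * real d / \<beta>) ^ d * exp (t / 2)"
      using assms by (intro power_linear_le_exp) auto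
    finally show "(t / (a * q) + 1) ^ d \<le> (2 * real d / \<beta>) ^ d * exp (t / 2)" .
  qed
  finally show ?thesis
    using c1_pos by (simp add: pos_le_divide_eq mult_ac)
qed

lemma sum_exp_neg_dist_separated_le:
  fixes X :: "'a set"
  assumes "d \<ge> 1" "finite X" "0 < q" "q \<le> diameter (UNIV :: 'a set)"
    and sep: "\<And>z z'. z \<in> X \<Longrightarrow> z' \<in> X \<Longrightarrow> z \<noteq> z' \<Longrightarrow> 2 * q \<le> dist z z'"
    and "0 < a" "0 < \<beta>" "\<beta> \<le> 1" "\<beta> \<le> a * q"
  shows "(\<Sum>x\<in>X. exp (- a * dist x p))
    \<le> c2 / c1 * (2 * real d / \<beta>) ^ d * exp (1 / 2) / (1 - exp (- 1 / 2))"
proof -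
  define k where "k x = nat \<lfloor>a * dist x p\<rfloor>" for x
  define G where "G = c2 / c1 * (2 * real d / \<beta>) ^ d * exp (1 / 2)"
  have "0 \<le> G" using c1_pos c2_nonneg assms by (simp add: G_def)
  have shell: "real (card {x \<in> X. k x = m}) * exp (- 1) ^ m \<le> G * exp (- 1 / 2) ^ m" for m
  proof -
    have "real (card {x \<in> X. k x = m}) \<le> c2 / c1 * (2 * real d / \<beta>) ^ d * exp ((m + 1) / 2)"
      using assms by (intro card_separated_le_exp[where p = p and q = q and a = a])
        (auto simp: k_def add.commute[of 1] real_of_int_floor_add_one_gt)
    also have "\<dots> = G * exp (1 / 2) ^ m"
      by (simp add: G_def add_divide_distrib exp_add exp_of_nat_mult[symmetric] mult_ac)
    finally have "real (card {x \<in> X. k x = m}) * exp (- 1) ^ m \<le> G * (exp (1 / 2) * exp (- 1)) ^ m"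
      by (simp add: power_mult_distrib mult_right_mono mult.assoc)
    also have "exp (1 / 2) * exp (- 1) = exp (- 1 / 2 :: real)"
      by (simp flip: exp_add)
    finally show ?thesis .
  qed
  have "(\<Sum>x\<in>X. exp (- a * dist x p)) \<le> (\<Sum>x\<in>X. exp (- 1) ^ k x)"
    using \<open>0 < a\<close> by (intro sum_mono) (simp add: k_def exp_of_nat_mult[symmetric])
  also have "\<dots> = (\<Sum>m\<in>k ` X. \<Sum>x\<in>{x \<in> X. k x = m}. exp (- 1) ^ k x)"
    by (rule sum.group[symmetric]) (use \<open>finite X\<close> in auto)
  also have "\<dots> = (\<Sum>m\<in>k ` X. real (card {x \<in> X. k x = m}) * exp (- 1) ^ m)"
    by (intro sum.cong refl) simp
  also have "\<dots> \<le> (\<Sum>m\<in>k ` X. G * exp (- 1 / 2) ^ m)"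
    by (intro sum_mono shell)
  also have "\<dots> \<le> (\<Sum>m. G * exp (- 1 / 2) ^ m)"
    using \<open>finite X\<close> \<open>0 \<le> G\<close> by (intro sum_le_suminf summable_mult summable_geometric) auto
  also have "\<dots> = G / (1 - exp (- 1 / 2))"
    by (simp add: suminf_mult suminf_geometric)
  finally show ?thesis unfolding G_def .
qed

text \<open>The \<open>max 1\<close> covers sets with at most one point, whose separation radius is the junk
  value \<open>Inf {} / 2\<close>.\<close>

definition exp_sum_bound :: "real \<Rightarrow> real" where
  "exp_sum_bound \<beta> = max 1 (c2 / c1 * (2 * real d / \<beta>) ^ d * exp (1 / 2) / (1 - exp (- 1 / 2)))"

lemma sum_exp_neg_dist_le_exp_sum_bound:
  fixes X :: "'a set"
  assumes "bounded (UNIV :: 'a set)" "d \<ge> 1" "finite X"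
    and "0 < a" "0 < \<beta>" "\<beta> \<le> 1" "\<beta> \<le> a * sep_rad X"
  shows "(\<Sum>x\<in>X. exp (- a * dist x p)) \<le> exp_sum_bound \<beta>"
proof (cases "\<exists>x\<in>X. \<exists>y\<in>X. x \<noteq> y")
  case True
  then obtain x y where "x \<in> X" "y \<in> X" "x \<noteq> y" by blast
  then have "(\<Sum>x\<in>X. exp (- a * dist x p))
      \<le> c2 / c1 * (2 * real d / \<beta>) ^ d * exp (1 / 2) / (1 - exp (- 1 / 2))"
    using assms sep_rad_pos sep_rad_le_diameter sep_rad_le_dist
    by (intro sum_exp_neg_dist_separated_le[where q = "sep_rad X"]) auto
  then show ?thesis unfolding exp_sum_bound_def by linarith
next
  case False
  then have "X = {} \<or> (\<exists>x. X = {x})" by blast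
  then show ?thesis using \<open>0 < a\<close> unfolding exp_sum_bound_def by (auto intro!: max.coboundedI1)
qed

section \<open>Truncation error of the prolongation\<close>

lemma truncated_decay_le_fill_dist_powr:
  fixes X Y :: "'a set" and g :: "'a \<Rightarrow> 'a \<Rightarrow> real"
  assumes "bounded (UNIV :: 'a set)" "d \<ge> 1" "0 < \<nu>" "0 \<le> C" "finite X" "finite Y"
    and "0 < fill_dist X" "fill_dist X < 1" "0 < \<beta>" "\<beta> \<le> 1"
    and "\<beta> \<le> \<nu> / (2 * fill_dist X) * sep_rad X" "\<beta> \<le> \<nu> / (2 * fill_dist X) * sep_rad Y"
    and decay: "\<And>\<xi> x. \<xi> \<in> X \<Longrightarrow> \<bar>g \<xi> x\<bar> \<le> C * exp (- \<nu> * dist x \<xi> / fill_dist X)"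
  shows "l2_opnorm (\<lambda>\<eta> \<xi>. if dist \<xi> \<eta> \<le> K * fill_dist X * \<bar>ln (fill_dist X)\<bar> then 0 else g \<xi> \<eta>) X Y
    \<le> C * exp_sum_bound \<beta> * fill_dist X powr (\<nu> / 2 * K)"
proof -
  define h a where "h = fill_dist X" and "a = \<nu> / (2 * fill_dist X)"
  have "0 < a" using assms by (simp add: a_def)
  have sums: "(\<Sum>x\<in>Z. exp (- a * dist x p)) \<le> exp_sum_bound \<beta>"
    if "finite Z" "\<beta> \<le> a * sep_rad Z" for Z :: "'a set" and p
    using assms that \<open>0 < a\<close> by (intro sum_exp_neg_dist_le_exp_sum_bound) auto
  have "0 \<le> exp_sum_bound \<beta>" by (simp add: exp_sum_bound_def le_max_iff_disj)
  have "l2_opnorm (\<lambda>\<eta> \<xi>. if dist \<xi> \<eta> \<le> K * h * \<bar>ln h\<bar> then 0 else g \<xi> \<eta>) X Y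
      \<le> C * exp (- a * (K * h * \<bar>ln h\<bar>)) * exp_sum_bound \<beta>"
  proof (rule l2_opnorm_truncated_le)
    fix \<xi> \<eta> assume "\<xi> \<in> X"
    then show "\<bar>g \<xi> \<eta>\<bar> \<le> C * exp (- 2 * a * dist \<xi> \<eta>)"
      using decay[of \<xi> \<eta>] \<open>0 < fill_dist X\<close> by (simp add: a_def dist_commute)
  qed (use assms sums \<open>0 < a\<close> \<open>0 \<le> exp_sum_bound \<beta>\<close> in \<open>auto simp: a_def\<close>)
  also have "exp (- a * (K * h * \<bar>ln h\<bar>)) = h powr (\<nu> / 2 * K)"
    using assms unfolding a_def h_def by (intro exp_neg_mult_abs_ln)
  finally show ?thesis
    using assms by (simp add: h_def mult_ac)
qed

lemma truncation_error_le:
  fixes X Y :: "'a set" and g :: "'a \<Rightarrow> 'a \<Rightarrow> real"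
  assumes "bounded (UNIV :: 'a set)" "d \<ge> 1" "0 < \<nu>" "0 < K" "0 < \<rho>" "0 < \<gamma>" "\<gamma> \<le> 1"
    and "finite X" "finite Y" "X \<noteq> {}"
    and "fill_dist X \<le> \<rho> * sep_rad X" "fill_dist Y \<le> \<rho> * sep_rad Y"
    and fill_ratio: "\<gamma> * fill_dist X \<le> fill_dist Y" and "fill_dist X < 1"
    and lagrange: "\<And>\<xi> z. \<xi> \<in> X \<Longrightarrow> z \<in> X \<Longrightarrow> g \<xi> z = (if \<xi> = z then 1 else 0)"
    and decay: "\<And>\<xi> x. \<xi> \<in> X \<Longrightarrow> \<bar>g \<xi> x\<bar> \<le> C * exp (- \<nu> * dist x \<xi> / fill_dist X)"
  shows "l2_opnorm (\<lambda>\<eta> \<xi>. if dist \<xi> \<eta> \<le> K * fill_dist X * \<bar>ln (fill_dist X)\<bar> then 0 else g \<xi> \<eta>) X Y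
    \<le> C * exp_sum_bound (min 1 (\<nu> * \<gamma> / (2 * \<rho>))) * \<gamma> powr (- (\<nu> / 2 * K))
        * fill_dist Y powr (\<nu> / 2 * K)"
proof -
  define h' h e \<beta> where "h' = fill_dist X" and "h = fill_dist Y" and "e = \<nu> / 2 * K"
    and "\<beta> = min 1 (\<nu> * \<gamma> / (2 * \<rho>))"
  have "0 \<le> h'" unfolding h'_def using assms by (intro fill_dist_nonneg)
  have "0 \<le> h" using fill_ratio \<open>0 \<le> h'\<close> \<open>0 < \<gamma>\<close> unfolding h'_def h_def
    by (metis mult_nonneg_nonneg less_imp_le order_trans)
  obtain \<xi> where "\<xi> \<in> X" using \<open>X \<noteq> {}\<close> by blast
  from decay[OF this, of \<xi>] have "0 \<le> C" by (rule nonneg_if_abs_le_mult_exp)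
  have "1 \<le> exp_sum_bound \<beta>" unfolding exp_sum_bound_def by simp
  show ?thesis
  proof (cases "h' = 0")
    case True
    text \<open>The decay bound is void here (division by 0), but then \<open>X\<close> is the whole space and
      every entry that survives the truncation is an off-diagonal Lagrange value.\<close>
    then have "x \<in> X" for x
      using assms by (intro fill_dist_eq_0_imp_mem) (auto simp: h'_def finite_imp_closed)
    then have "l2_opnorm (\<lambda>\<eta> \<xi>. if dist \<xi> \<eta> \<le> K * h' * \<bar>ln h'\<bar> then 0 else g \<xi> \<eta>) X Y = 0"
      using True lagrange by (intro l2_opnorm_eq_0) auto
    then show ?thesis
      using \<open>0 \<le> C\<close> \<open>1 \<le> exp_sum_bound \<beta>\<close> by (simp add: h'_def h_def e_def \<beta>_def)
  next
    case False
    with \<open>0 \<le> h'\<close> have "0 < h'" by simp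
    have "\<beta> \<le> \<nu> / (2 * h') * sep_rad Z" if "\<gamma> * h' \<le> fill_dist Z" "fill_dist Z \<le> \<rho> * sep_rad Z" for Z :: "'a set"
      unfolding \<beta>_def by (rule min_le_scaled_sep_rad[OF that]) (use assms \<open>0 < h'\<close> in auto)
    moreover have "\<gamma> * h' \<le> h'" using \<open>\<gamma> \<le> 1\<close> \<open>0 \<le> h'\<close> \<open>0 < \<gamma>\<close> by (intro mult_left_le_one_le) auto
    ultimately have "l2_opnorm (\<lambda>\<eta> \<xi>. if dist \<xi> \<eta> \<le> K * h' * \<bar>ln h'\<bar> then 0 else g \<xi> \<eta>) X Y
        \<le> C * exp_sum_bound \<beta> * h' powr e"
      using assms \<open>0 < h'\<close> \<open>0 \<le> C\<close> unfolding h'_def e_def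
      by (intro truncated_decay_le_fill_dist_powr) (auto simp: \<beta>_def h_def)
    also have "\<dots> \<le> C * exp_sum_bound \<beta> * (\<gamma> powr (- e) * h powr e)"
    proof (intro mult_left_mono)
      have "h' powr e \<le> (h / \<gamma>) powr e"
        using fill_ratio \<open>0 \<le> h'\<close> assms by (intro powr_mono2) (auto simp: e_def h'_def h_def field_simps)
      also have "\<dots> = \<gamma> powr (- e) * h powr e"
        using \<open>0 < \<gamma>\<close> \<open>0 \<le> h\<close> by (simp add: powr_divide powr_minus_divide)
      finally show "h' powr e \<le> \<gamma> powr (- e) * h powr e" .
    qed (use \<open>0 \<le> C\<close> \<open>1 \<le> exp_sum_bound \<beta>\<close> in simp)
    finally show ?thesis
      using \<open>0 \<le> C\<close> \<open>1 \<le> exp_sum_bound \<beta>\<close> by (simp add: h'_def h_def e_def \<beta>_def mult_ac)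
  qed
qed

lemma prolong_truncation_error_le:
  fixes Xi :: "nat \<Rightarrow> 'a set" and chi :: "nat \<Rightarrow> 'a \<Rightarrow> 'a \<Rightarrow> real"
  assumes "bounded (UNIV :: 'a set)" "d \<ge> 1" "0 < \<nu>" "0 < K" "0 < \<rho>"
    and "0 < \<gamma>1" "\<gamma>1 \<le> 1" "\<gamma>2 \<le> 1" "0 < hmax" "hmax < 1"
    and "\<And>j. j \<le> L \<Longrightarrow> finite (Xi j)" and nonempty: "\<And>j. j \<le> L \<Longrightarrow> Xi j \<noteq> {}"
    and "\<And>j. j \<le> L \<Longrightarrow> fill_dist (Xi j) \<le> \<rho> * sep_rad (Xi j)"
    and "\<And>j. j < L \<Longrightarrow> \<gamma>1 * fill_dist (Xi j) \<le> fill_dist (Xi (Suc j))"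
    and fill_upper: "\<And>j. j < L \<Longrightarrow> fill_dist (Xi (Suc j)) \<le> \<gamma>2 * fill_dist (Xi j)"
    and fill_0: "fill_dist (Xi 0) \<le> hmax"
    and "\<And>j \<xi> z. j \<le> L \<Longrightarrow> \<xi> \<in> Xi j \<Longrightarrow> z \<in> Xi j \<Longrightarrow> chi j \<xi> z = (if \<xi> = z then 1 else 0)"
    and decay: "\<And>j \<xi> x. j \<le> L \<Longrightarrow> \<xi> \<in> Xi j \<Longrightarrow> \<bar>chi j \<xi> x\<bar> \<le> Cpw * exp (- \<nu> * dist x \<xi> / fill_dist (Xi j))"
    and "1 \<le> l" "l \<le> L"
  shows "l2_opnorm
       (\<lambda>\<eta> \<xi>. prolong chi l \<eta> \<xi>
          - prolong_tr chi (K * fill_dist (Xi (l - 1)) * \<bar>ln (fill_dist (Xi (l - 1)))\<bar>) l \<eta> \<xi>)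
       (Xi (l - 1)) (Xi l)
     \<le> Cpw * (exp_sum_bound (min 1 (\<nu> * \<gamma>1 / (2 * \<rho>))) * \<gamma>1 powr (- (\<nu> / 2 * K)) / (K * \<bar>ln hmax\<bar>) ^ d)
         * (K * \<bar>ln (fill_dist (Xi l))\<bar>) ^ d * fill_dist (Xi l) powr (\<nu> / 2 * K)"
proof -
  define B e P h where "B = exp_sum_bound (min 1 (\<nu> * \<gamma>1 / (2 * \<rho>)))" and "e = \<nu> / 2 * K"
    and "P = (K * \<bar>ln hmax\<bar>) ^ d" and "h = fill_dist (Xi l)"
  obtain j where l: "l = Suc j" using \<open>1 \<le> l\<close> by (cases l) auto
  have fill_nonneg: "0 \<le> fill_dist (Xi i)" if "i \<le> L" for i
    using assms that by (intro fill_dist_nonneg) auto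
  have fill_le_hmax: "fill_dist (Xi i) \<le> hmax" if "i \<le> L" for i
    using fill_0 fill_upper fill_nonneg \<open>\<gamma>2 \<le> 1\<close> that by (rule le_initial_if_contracting)
  obtain \<xi> where "\<xi> \<in> Xi 0" using nonempty by blast
  from decay[OF _ this, of \<xi>] have "0 \<le> Cpw" by (simp add: nonneg_if_abs_le_mult_exp)
  have "0 < K * \<bar>ln hmax\<bar>" using \<open>0 < K\<close> \<open>0 < hmax\<close> \<open>hmax < 1\<close> by (simp add: mult_pos_neg)
  then have "0 < P" unfolding P_def by (rule zero_less_power)
  have "l2_opnorm
       (\<lambda>\<eta> \<xi>. prolong chi l \<eta> \<xi>
          - prolong_tr chi (K * fill_dist (Xi (l - 1)) * \<bar>ln (fill_dist (Xi (l - 1)))\<bar>) l \<eta> \<xi>)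
       (Xi (l - 1)) (Xi l)
     \<le> Cpw * B * \<gamma>1 powr (- e) * h powr e"
    unfolding prolong_minus_prolong_tr l diff_Suc_1 B_def e_def h_def
    using assms fill_le_hmax[of j] \<open>l \<le> L\<close> l
    by (intro truncation_error_le) auto
  also have "\<dots> = Cpw * B * \<gamma>1 powr (- e) / P * (h powr e * P)"
    using \<open>0 < P\<close> by simp
  also have "\<dots> \<le> Cpw * B * \<gamma>1 powr (- e) / P * (h powr e * (K * \<bar>ln h\<bar>) ^ d)"
    using \<open>0 \<le> Cpw\<close> \<open>0 < P\<close> \<open>0 < K\<close> \<open>hmax < 1\<close> fill_nonneg fill_le_hmax \<open>l \<le> L\<close>
    unfolding P_def h_def
    by (intro mult_left_mono powr_mult_abs_ln_power_le) (auto simp: B_def exp_sum_bound_def)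
  finally show ?thesis unfolding B_def e_def P_def h_def by (simp add: mult_ac)
qed

end

theorem lemma7p3:
  fixes \<mu> :: "'a::metric_space measure"
    and d :: nat and c1 c2 \<nu> Cpw K \<rho> \<gamma>1 \<gamma>2 hmax :: real
  assumes compact: "compact (UNIV :: 'a set)"
    and sets_mu: "sets \<mu> = sets borel"
    and dim: "d \<ge> 1"
    and c_pos: "c1 > 0" "c2 > 0"
    and ball_lower: "\<And>x r. 0 < r \<Longrightarrow> r \<le> diameter (UNIV :: 'a set) \<Longrightarrow> c1 * r ^ d \<le> measure \<mu> (ball x r)"
    and ball_upper: "\<And>x r. 0 < r \<Longrightarrow> measure \<mu> (ball x r) \<le> c2 * r ^ d"
    and fin_mu: "emeasure \<mu> UNIV < \<infinity>"
    and nu_pos: "\<nu> > 0"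
    and K_pos: "K > 0"
    and rho: "\<rho> \<ge> 1"
    and gammas: "0 < \<gamma>1" "\<gamma>1 \<le> \<gamma>2" "\<gamma>2 < 1"
    and hmax: "0 < hmax" "hmax < 1"
  shows "\<exists>Ctrunc. \<forall>(L::nat) (Xi :: nat \<Rightarrow> 'a set) (chi :: nat \<Rightarrow> 'a \<Rightarrow> 'a \<Rightarrow> real) (l::nat).
     ((\<forall>j\<le>L. finite (Xi j) \<and> Xi j \<noteq> {}) \<and>
      (\<forall>j<L. Xi j \<subseteq> Xi (Suc j)) \<and>
      (\<forall>j\<le>L. sep_rad (Xi j) \<le> fill_dist (Xi j) \<and> fill_dist (Xi j) \<le> \<rho> * sep_rad (Xi j)) \<and>
      (\<forall>j<L. \<gamma>1 * fill_dist (Xi j) \<le> fill_dist (Xi (Suc j)) \<and>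
             fill_dist (Xi (Suc j)) \<le> \<gamma>2 * fill_dist (Xi j)) \<and>
      fill_dist (Xi 0) \<le> hmax \<and>
      (\<forall>j\<le>L. \<forall>xi\<in>Xi j. \<forall>z\<in>Xi j. chi j xi z = (if xi = z then 1 else 0)) \<and>
      (\<forall>j\<le>L. \<forall>xi\<in>Xi j. \<forall>x. \<bar>chi j xi x\<bar> \<le> Cpw * exp (- \<nu> * dist x xi / fill_dist (Xi j))) \<and>
      1 \<le> l \<and> l \<le> L)
     \<longrightarrow>
     l2_opnorm
       (\<lambda>eta xi. prolong chi l eta xi
          - prolong_tr chi (K * fill_dist (Xi (l - 1)) * \<bar>ln (fill_dist (Xi (l - 1)))\<bar>) l eta xi)
       (Xi (l - 1)) (Xi l)
     \<le> Cpw * Ctrunc * (K * \<bar>ln (fill_dist (Xi l))\<bar>) ^ d * fill_dist (Xi l) powr (\<nu> / 2 * K)"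
proof -
  interpret ahlfors_regular_measure \<mu> d c1 c2
    using sets_mu fin_mu c_pos ball_lower ball_upper by unfold_locales auto
  have "bounded (UNIV :: 'a set)" using compact by (rule compact_imp_bounded)
  show ?thesis
    by (intro exI[of _ "exp_sum_bound (min 1 (\<nu> * \<gamma>1 / (2 * \<rho>))) * \<gamma>1 powr (- (\<nu> / 2 * K))
                          / (K * \<bar>ln hmax\<bar>) ^ d"] allI impI, elim conjE,
        rule prolong_truncation_error_le[where ?\<gamma>2.0 = \<gamma>2])
      (use assms \<open>bounded (UNIV :: 'a set)\<close> in auto)
qed

end
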